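(* Let $m\in\mathbb Z_{\ge0}$ and $c\in\mathbb C$ be fixed, and let $D^c_{m+1}=z^2\frac{d}{dz}\left(\frac{1-z}{z}\right)\left(z\frac{d}{dz}+c-1\right)^m\in\mathbb C[z,\frac{d}{dz}]$, a linear ordinary differential operator of order $m+1$. (1) The function $F(z)=Li_{m,c}(z)$ satisfies $D^c_{m+1}F(z)=0$. (2) The singular points of $D^c_{m+1}$ on the Riemann sphere are contained in $\{0,1,\infty\}$ and are all regular singular points; in particular $D^c_{m+1}$ is a Fuchsian operator for all $c\in\mathbb C$. (3) For $c\in\mathbb C\setminus\mathbb Z_{\le0}$, a basis of solutions of $D^c_{m+1}F=0$ on $z\in\mathbb C\setminus((-\infty,0]\cup[1,\infty))$ is $\{Li_{m,c}(z),\ z^{1-c}(\log z)^{m-1},\ z^{1-c}(\log z)^{m-2},\dots,\ z^{1-c}\}$. (4) For $c=-k\in\mathbb Z_{\le0}$, a basis of solutions of $D^c_{m+1}F=0$ on $z\in\mathbb C\setminus((-\infty,0]\cup[1,\infty))$ is $\{Li^*_{m,-k}(z),\ z^{1-c}(\log z)^{m-1},\dots,\ z^{1-c}\}$, where $Li^*_{m,-k}(z)=\sum_{n\ge0,\,n\ne k}\frac{z^{n+1}}{(n-k)^m}+\frac1{m!}z^{k+1}(\log z)^m$.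
   Context: For $c\notin\mathbb Z_{\le0}$, $Li_{m,c}(z)$ denotes the function $\sum_{n=0}^\infty\frac{z^{n+1}}{(n+c)^m}$ for $|z|<1$ (principal branch powers $(n+c)^{-m}$ are ordinary integer powers here), analytically continued to the cut plane $\mathbb C\setminus((-\infty,0]\cup[1,\infty))$. $\log$ is the principal branch and $z^{1-c}=e^{(1-c)\log z}$. *)

theory Defs
  imports "HOL-Analysis.Analysis" "HOL-Computational_Algebra.Polynomial"
begin

definition cut_plane :: "complex set" where
  "cut_plane = - ({z. Im z = 0 \<and> Re z \<le> 0} \<union> {z. Im z = 0 \<and> 1 \<le> Re z})"

definition Li :: "nat \<Rightarrow> complex \<Rightarrow> complex \<Rightarrow> complex" where
  "Li m c = (SOME f. f holomorphic_on cut_plane \<and>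
      (\<forall>z\<in>cut_plane \<inter> ball 0 1. f z = (\<Sum>n. z ^ (n+1) / (of_nat n + c) ^ m)))"

definition Li_star :: "nat \<Rightarrow> nat \<Rightarrow> complex \<Rightarrow> complex" where
  "Li_star m k = (SOME f. f holomorphic_on cut_plane \<and>
      (\<forall>z\<in>cut_plane \<inter> ball 0 1. f z =
          (\<Sum>n. if n = k then 0 else z ^ (n+1) / (of_int (int n - int k)) ^ m)
          + z ^ (k+1) * (Ln z) ^ m / of_nat (fact m)))"

definition theta_c :: "complex \<Rightarrow> (complex \<Rightarrow> complex) \<Rightarrow> complex \<Rightarrow> complex" where
  "theta_c c F = (\<lambda>z. z * deriv F z + (c - 1) * F z)"

definition Dop :: "complex \<Rightarrow> nat \<Rightarrow> (complex \<Rightarrow> complex) \<Rightarrow> complex \<Rightarrow> complex" where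
  "Dop c m F = (\<lambda>z. z ^ 2 * deriv (\<lambda>w. (1 - w) / w * ((theta_c c ^^ m) F) w) z)"

definition ode_apply :: "(nat \<Rightarrow> complex poly) \<Rightarrow> nat \<Rightarrow> (complex \<Rightarrow> complex) \<Rightarrow> complex \<Rightarrow> complex" where
  "ode_apply a n F z = (\<Sum>j\<le>n. poly (a j) z * (deriv ^^ j) F z)"

text \<open>z0 is an ordinary (non-singular) point: all a_j/a_n are holomorphic at z0.\<close>
definition ode_ordinary_at :: "(nat \<Rightarrow> complex poly) \<Rightarrow> nat \<Rightarrow> complex \<Rightarrow> bool" where
  "ode_ordinary_at a n z0 \<longleftrightarrow> (\<forall>j<n. a j = 0 \<or> order z0 (a n) \<le> order z0 (a j))"

text \<open>z0 is ordinary or a regular singular point (Fuchs/Frobenius criterion):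
  a_j/a_n has a pole of order at most n-j at z0.\<close>
definition ode_regular_at :: "(nat \<Rightarrow> complex poly) \<Rightarrow> nat \<Rightarrow> complex \<Rightarrow> bool" where
  "ode_regular_at a n z0 \<longleftrightarrow> (\<forall>j<n. a j = 0 \<or> order z0 (a n) \<le> order z0 (a j) + (n - j))"

text \<open>infinity is ordinary or a regular singular point: a_j/a_n = O(z^-(n-j)) at infinity.\<close>
definition ode_regular_at_infinity :: "(nat \<Rightarrow> complex poly) \<Rightarrow> nat \<Rightarrow> bool" where
  "ode_regular_at_infinity a n \<longleftrightarrow> (\<forall>j<n. a j = 0 \<or> degree (a j) + (n - j) \<le> degree (a n))"

definition is_solution :: "complex \<Rightarrow> nat \<Rightarrow> (complex \<Rightarrow> complex) \<Rightarrow> bool" where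
  "is_solution c m F \<longleftrightarrow> F holomorphic_on cut_plane \<and> (\<forall>z\<in>cut_plane. Dop c m F z = 0)"

definition solution_basis :: "complex \<Rightarrow> nat \<Rightarrow> (nat \<Rightarrow> complex \<Rightarrow> complex) \<Rightarrow> nat \<Rightarrow> bool" where
  "solution_basis c m f N \<longleftrightarrow>
     (\<forall>i\<le>N. is_solution c m (f i)) \<and>
     (\<forall>u::nat \<Rightarrow> complex. (\<forall>z\<in>cut_plane. (\<Sum>i\<le>N. u i * f i z) = 0) \<longrightarrow> (\<forall>i\<le>N. u i = 0)) \<and>
     (\<forall>F. is_solution c m F \<longrightarrow> (\<exists>u::nat \<Rightarrow> complex. \<forall>z\<in>cut_plane. F z = (\<Sum>i\<le>N. u i * f i z)))"

end

theory Submission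
  imports Defs "HOL-Complex_Analysis.Conformal_Mappings"
begin

text \<open>
  Write \<open>\<theta> = z d/dz + c - 1\<close>, so that \<open>D = z^2 d/dz ((1 - z)/z) \<theta>^m\<close>.  On the connected cut
  plane, \<open>D F = 0\<close> means \<open>\<theta>^m F = K z/(1 - z)\<close> for a constant \<open>K\<close>.  Since \<open>\<theta>\<close> lowers the power
  of the logarithm in \<open>z^(1-c) (log z)^j\<close> by one, the kernel of \<open>\<theta>^m\<close> is spanned by these functions
  for \<open>j < m\<close>, so the solutions are spanned by them and any \<open>f0\<close> with \<open>\<theta>^m f0 = z/(1 - z)\<close>.
  On the unit disc \<open>\<theta>\<close> multiplies the coefficient of \<open>z^(n+1)\<close> by \<open>n + c\<close>, hence the series
  defining \<open>Li_{m,c}\<close> (and \<open>Li*_{m,-k}\<close>, whose logarithmic term stands in for the resonant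
  coefficient \<open>n = k\<close>) is such an \<open>f0\<close>; it continues to the cut plane because \<open>\<theta>\<close> is onto there.
  Finally, expanding \<open>\<theta>^k\<close> in the operators \<open>z^j (d/dz)^j\<close> shows that \<open>D\<close> has polynomial
  coefficients: the leading one is \<open>z^(m+1) (1 - z)\<close>, and the \<open>j\<close>-th is \<open>z^j\<close> times a polynomial
  of degree at most one.  These are the Fuchs conditions at \<open>0\<close>, \<open>1\<close> and \<open>\<infinity>\<close>.
\<close>

section \<open>The cut plane\<close>

lemma cut_plane_iff: "z \<in> cut_plane \<longleftrightarrow> Im z \<noteq> 0 \<or> (0 < Re z \<and> Re z < 1)"
  unfolding cut_plane_def by auto

lemma open_cut_plane: "open cut_plane"
  unfolding cut_plane_def
  by (intro open_Compl closed_Un closed_Collect_conj closed_Collect_eq closed_Collect_le continuous_intros)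

lemma cut_plane_not_nonpos_Reals: "z \<in> cut_plane \<Longrightarrow> z \<notin> \<real>\<^sub>\<le>\<^sub>0"
  by (auto simp: cut_plane_iff complex_nonpos_Reals_iff)

lemma cut_plane_disjoint_nonpos_Reals: "cut_plane \<inter> \<real>\<^sub>\<le>\<^sub>0 = {}"
  using cut_plane_not_nonpos_Reals by blast

lemma cut_plane_nonzero: "z \<in> cut_plane \<Longrightarrow> z \<noteq> 0"
  by (auto simp: cut_plane_iff)

lemma cut_plane_ne_1: "z \<in> cut_plane \<Longrightarrow> z \<noteq> 1"
  by (auto simp: cut_plane_iff)

lemma half_in_cut_plane: "1/2 \<in> cut_plane"
  by (simp add: cut_plane_iff)

lemma closed_segment_half_subset_cut_plane:
  assumes "z \<in> cut_plane"
  shows "closed_segment (1/2) z \<subseteq> cut_plane"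
proof (cases "Im z = 0")
  case True
  define I where "I = \<real> \<inter> {x. Re x > 0} \<inter> {x. Re x < 1}"
  have "closed_segment (1/2) z \<subseteq> I"
  proof (rule closed_segment_subset)
    show "convex I"
      unfolding I_def by (intro convex_Int convex_Reals convex_halfspace_Re_gt convex_halfspace_Re_lt)
    show "1/2 \<in> I" "z \<in> I"
      using assms True by (auto simp: I_def cut_plane_iff complex_is_Real_iff)
  qed
  then show ?thesis by (auto simp: I_def cut_plane_iff complex_is_Real_iff)
next
  case False
  show ?thesis
  proof
    fix w assume "w \<in> closed_segment (1/2) z"
    then obtain u :: real where w: "w = (1 - u) *\<^sub>R (1/2) + u *\<^sub>R z"
      by (auto simp: closed_segment_def)
    show "w \<in> cut_plane"
    proof (cases "u = 0")
      case True
      then have "w = 1/2" using w by (metis add.right_neutral diff_zero scaleR_one scaleR_zero_left)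
      then show ?thesis using half_in_cut_plane by blast
    next
      case False
      then have "Im w \<noteq> 0" using w \<open>Im z \<noteq> 0\<close> by simp
      then show ?thesis by (simp add: cut_plane_iff)
    qed
  qed
qed

lemma starlike_cut_plane: "starlike cut_plane"
  unfolding starlike_def using half_in_cut_plane closed_segment_half_subset_cut_plane by blast

lemma connected_cut_plane: "connected cut_plane"
  by (rule starlike_imp_connected[OF starlike_cut_plane])

definition cut_disc :: "complex set" where
  "cut_disc = cut_plane \<inter> ball 0 1"

lemma open_cut_disc: "open cut_disc"
  unfolding cut_disc_def using open_cut_plane by auto

lemma cut_disc_subset: "cut_disc \<subseteq> cut_plane" "cut_disc \<subseteq> ball 0 1"
  unfolding cut_disc_def by auto

lemma half_in_cut_disc: "1/2 \<in> cut_disc"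
  unfolding cut_disc_def using half_in_cut_plane by simp

lemma connected_cut_disc: "connected cut_disc"
proof (rule starlike_imp_connected)
  have "closed_segment (1/2) z \<subseteq> cut_disc" if "z \<in> cut_disc" for z
  proof -
    have "closed_segment (1/2) z \<subseteq> ball 0 1"
      using that by (intro closed_segment_subset) (auto simp: cut_disc_def)
    then show ?thesis
      using that closed_segment_half_subset_cut_plane[of z] by (auto simp: cut_disc_def)
  qed
  then show "starlike cut_disc"
    unfolding starlike_def using half_in_cut_disc by blast
qed

section \<open>The operator \<open>\<theta>\<close> and its kernel\<close>

lemma theta_c_cong:
  assumes "open S" "z \<in> S" "\<And>w. w \<in> S \<Longrightarrow> F w = G w"
  shows "theta_c c F z = theta_c c G z"
proof -
  have "deriv F z = deriv G z"
    using assms by (intro deriv_cong_ev) (auto intro: eventually_mono[OF eventually_nhds_in_open])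
  then show ?thesis using assms by (simp add: theta_c_def)
qed

lemma theta_c_funpow_cong:
  assumes "open S" "z \<in> S" "\<And>w. w \<in> S \<Longrightarrow> F w = G w"
  shows "(theta_c c ^^ k) F z = (theta_c c ^^ k) G z"
  using assms(2)
proof (induction k arbitrary: z)
  case (Suc k)
  then show ?case
    using theta_c_cong[OF assms(1) Suc.prems, of "(theta_c c ^^ k) F" "(theta_c c ^^ k) G"] by simp
qed (use assms in simp)

lemma holomorphic_on_theta_c:
  "F holomorphic_on S \<Longrightarrow> open S \<Longrightarrow> theta_c c F holomorphic_on S"
  unfolding theta_c_def by (intro holomorphic_intros holomorphic_deriv)

lemma holomorphic_on_theta_c_funpow:
  "F holomorphic_on S \<Longrightarrow> open S \<Longrightarrow> (theta_c c ^^ k) F holomorphic_on S"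
  by (induction k) (auto intro: holomorphic_on_theta_c)

lemma theta_c_sum:
  assumes "finite I" "\<And>i. i \<in> I \<Longrightarrow> f i holomorphic_on S" "open S" "z \<in> S"
  shows "theta_c c (\<lambda>z. \<Sum>i\<in>I. u i * f i z) z = (\<Sum>i\<in>I. u i * theta_c c (f i) z)"
proof -
  have "((\<lambda>z. \<Sum>i\<in>I. u i * f i z) has_field_derivative (\<Sum>i\<in>I. u i * deriv (f i) z)) (at z)"
    using assms by (intro DERIV_sum DERIV_cmult holomorphic_derivI) auto
  then have "deriv (\<lambda>z. \<Sum>i\<in>I. u i * f i z) z = (\<Sum>i\<in>I. u i * deriv (f i) z)"
    by (rule DERIV_imp_deriv)
  moreover have "(\<Sum>i\<in>I. u i * (z * deriv (f i) z + (c - 1) * f i z))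
      = (\<Sum>i\<in>I. z * (u i * deriv (f i) z) + (c - 1) * (u i * f i z))"
    by (rule sum.cong) (auto simp: algebra_simps)
  then have "(\<Sum>i\<in>I. u i * (z * deriv (f i) z + (c - 1) * f i z))
      = z * (\<Sum>i\<in>I. u i * deriv (f i) z) + (c - 1) * (\<Sum>i\<in>I. u i * f i z)"
    by (simp only: sum.distrib sum_distrib_left)
  ultimately show ?thesis unfolding theta_c_def by simp
qed

lemma theta_c_funpow_sum:
  assumes "finite I" "\<And>i. i \<in> I \<Longrightarrow> f i holomorphic_on S" "open S" "z \<in> S"
  shows "(theta_c c ^^ k) (\<lambda>z. \<Sum>i\<in>I. u i * f i z) z = (\<Sum>i\<in>I. u i * (theta_c c ^^ k) (f i) z)"
  using assms(4)
proof (induction k arbitrary: z)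
  case (Suc k)
  have "(theta_c c ^^ Suc k) (\<lambda>z. \<Sum>i\<in>I. u i * f i z) z
      = theta_c c (\<lambda>z. \<Sum>i\<in>I. u i * (theta_c c ^^ k) (f i) z) z"
    using theta_c_cong[OF assms(3) Suc.prems, of "(theta_c c ^^ k) (\<lambda>z. \<Sum>i\<in>I. u i * f i z)"
        "\<lambda>z. \<Sum>i\<in>I. u i * (theta_c c ^^ k) (f i) z"] Suc.IH by simp
  also have "\<dots> = (\<Sum>i\<in>I. u i * theta_c c ((theta_c c ^^ k) (f i)) z)"
    by (rule theta_c_sum[OF assms(1) _ assms(3) Suc.prems])
       (use assms holomorphic_on_theta_c_funpow in auto)
  finally show ?case by simp
qed simp

lemma theta_c_funpow_lincomb:
  assumes "F holomorphic_on S" "G holomorphic_on S" "open S" "z \<in> S"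
  shows "(theta_c c ^^ k) (\<lambda>z. a * F z + b * G z) z
       = a * (theta_c c ^^ k) F z + b * (theta_c c ^^ k) G z"
  using theta_c_funpow_sum[where I = "UNIV :: bool set" and f = "\<lambda>i. if i then F else G" and S = S and z = z
      and c = c and k = k and u = "\<lambda>i. if i then a else b"] assms
  by (simp add: UNIV_bool add.commute)

lemma theta_c_funpow_scale:
  assumes "F holomorphic_on S" "open S" "z \<in> S"
  shows "(theta_c c ^^ k) (\<lambda>z. a * F z) z = a * (theta_c c ^^ k) F z"
  using theta_c_funpow_lincomb[OF assms(1,1,2,3), where c = c and k = k and a = a and b = 0] by simp

lemma theta_c_funpow_vanishing:
  assumes "open S" "\<And>w. w \<in> S \<Longrightarrow> F w = 0" "z \<in> S"
  shows "(theta_c c ^^ k) F z = 0"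
proof -
  have "(theta_c c ^^ k) (\<lambda>_. 0) = (\<lambda>_. 0)"
    by (induction k) (auto simp: theta_c_def)
  then show ?thesis
    using theta_c_funpow_cong[OF assms(1,3), where G = "\<lambda>_. 0" and c = c and k = k] assms(2) by simp
qed

lemma theta_c_kernel:
  assumes S: "open S" "connected S" "S \<inter> \<real>\<^sub>\<le>\<^sub>0 = {}"
    and F: "F holomorphic_on S" and theta: "\<And>z. z \<in> S \<Longrightarrow> theta_c c F z = 0"
  shows "\<exists>a. \<forall>z\<in>S. F z = a * z powr (1 - c)"
proof -
  define h where "h z = z powr (c - 1) * F z" for z
  \<comment> \<open>\<open>h' = z^(c-2) \<theta> F\<close>\<close>
  have "(h has_field_derivative 0) (at z)" if z: "z \<in> S" for z
  proof -
    have np: "z \<notin> \<real>\<^sub>\<le>\<^sub>0" using z S by blast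
    have "(h has_field_derivative (c - 1) * z powr (c - 1 - 1) * F z + deriv F z * z powr (c - 1)) (at z)"
      unfolding h_def using F S z
      by (intro DERIV_mult has_field_derivative_powr np holomorphic_derivI) auto
    moreover have "z powr (c - 1) = z powr (c - 1 - 1) * z"
      using powr_add[of z "c - 1 - 1" 1] np by auto
    then have "(c - 1) * z powr (c - 1 - 1) * F z + deriv F z * z powr (c - 1)
        = z powr (c - 1 - 1) * theta_c c F z"
      unfolding theta_c_def by (simp add: algebra_simps)
    ultimately show ?thesis using theta[OF z] by simp
  qed
  moreover have "continuous_on S h"
    unfolding h_def using S F
    by (intro holomorphic_on_imp_continuous_on holomorphic_intros) auto
  ultimately obtain a where a: "\<And>z. z \<in> S \<Longrightarrow> h z = a"
    using DERIV_zero_connected_constant[OF S(2,1) finite.emptyI] by (metis Diff_empty)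
  have "F z = a * z powr (1 - c)" if z: "z \<in> S" for z
  proof -
    have "z \<noteq> 0" using z S by auto
    then have "z powr (1 - c) * z powr (c - 1) = 1" using powr_add[of z "1 - c" "c - 1"] by simp
    then show ?thesis using a[OF z] unfolding h_def by (metis mult.assoc mult.commute mult_1)
  qed
  then show ?thesis by blast
qed

definition log_sol :: "complex \<Rightarrow> nat \<Rightarrow> complex \<Rightarrow> complex" where
  "log_sol c j z = z powr (1 - c) * Ln z ^ j"

lemma holomorphic_on_log_sol: "S \<inter> \<real>\<^sub>\<le>\<^sub>0 = {} \<Longrightarrow> log_sol c j holomorphic_on S"
  unfolding log_sol_def by (intro holomorphic_intros) auto

lemma theta_c_log_sol:
  assumes z: "z \<notin> \<real>\<^sub>\<le>\<^sub>0"
  shows "theta_c c (log_sol c j) z = of_nat j * log_sol c (j - 1) z"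
proof -
  have nz: "z \<noteq> 0" using z by auto
  have "(log_sol c j has_field_derivative (1 - c) * z powr (1 - c - 1) * Ln z ^ j
        + of_nat j * (inverse z * Ln z ^ (j - Suc 0)) * z powr (1 - c)) (at z)"
    unfolding log_sol_def
    by (intro DERIV_mult has_field_derivative_powr[OF z] DERIV_power[OF has_field_derivative_Ln[OF z]])
  moreover have "z powr (1 - c) = z powr (1 - c - 1) * z"
    using powr_add[of z "1 - c - 1" 1] nz by simp
  ultimately show ?thesis
    unfolding theta_c_def using nz
    by (simp add: DERIV_imp_deriv log_sol_def field_simps)
qed

lemma open_slit_plane: "open (- \<real>\<^sub>\<le>\<^sub>0 :: complex set)"
  by (simp add: open_Compl)

lemma theta_c_funpow_log_sol:
  assumes "i < k" "z \<notin> \<real>\<^sub>\<le>\<^sub>0"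
  shows "(theta_c c ^^ k) (log_sol c i) z = 0"
  using assms
proof (induction i arbitrary: k z)
  case 0
  then obtain k' where k: "k = Suc k'" by (cases k) auto
  have "(theta_c c ^^ k') (theta_c c (log_sol c 0)) z = 0"
    using 0 by (intro theta_c_funpow_vanishing[OF open_slit_plane]) (auto simp: theta_c_log_sol)
  then show ?case unfolding k funpow_Suc_right by simp
next
  case (Suc i)
  then obtain k' where k: "k = Suc k'" "i < k'" by (cases k) auto
  have "(theta_c c ^^ k') (theta_c c (log_sol c (Suc i))) z
      = (theta_c c ^^ k') (\<lambda>z. of_nat (Suc i) * log_sol c i z) z"
    using Suc.prems by (intro theta_c_funpow_cong[OF open_slit_plane]) (auto simp: theta_c_log_sol)
  also have "\<dots> = of_nat (Suc i) * (theta_c c ^^ k') (log_sol c i) z"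
    using Suc.prems by (intro theta_c_funpow_scale[OF holomorphic_on_log_sol open_slit_plane]) auto
  also have "\<dots> = 0" using Suc.IH[OF k(2) Suc.prems(2)] by simp
  finally show ?case unfolding k funpow_Suc_right by simp
qed

lemma theta_c_funpow_kernel:
  assumes S: "open S" "connected S" "S \<inter> \<real>\<^sub>\<le>\<^sub>0 = {}" and F: "F holomorphic_on S"
    and theta: "\<And>z. z \<in> S \<Longrightarrow> (theta_c c ^^ k) F z = 0"
  shows "\<exists>u. \<forall>z\<in>S. F z = (\<Sum>i<k. u i * log_sol c i z)"
  using F theta
proof (induction k arbitrary: F)
  case (Suc k)
  have "theta_c c F holomorphic_on S" using Suc.prems S by (intro holomorphic_on_theta_c)
  moreover have "\<And>z. z \<in> S \<Longrightarrow> (theta_c c ^^ k) (theta_c c F) z = 0"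
    using Suc.prems(2) by (simp add: funpow_Suc_right del: funpow.simps)
  ultimately obtain u where u: "\<And>z. z \<in> S \<Longrightarrow> theta_c c F z = (\<Sum>i<k. u i * log_sol c i z)"
    using Suc.IH by blast
  define P where "P z = (\<Sum>i<k. (u i / of_nat (Suc i)) * log_sol c (Suc i) z)" for z
  have P: "P holomorphic_on S"
    unfolding P_def using S by (intro holomorphic_intros holomorphic_on_log_sol)
  have theta_P: "theta_c c P z = theta_c c F z" if z: "z \<in> S" for z
  proof -
    have np: "z \<notin> \<real>\<^sub>\<le>\<^sub>0" using z S by blast
    have "theta_c c P z = (\<Sum>i<k. (u i / of_nat (Suc i)) * theta_c c (log_sol c (Suc i)) z)"
      unfolding P_def using S z by (intro theta_c_sum holomorphic_on_log_sol) auto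
    also have "\<dots> = (\<Sum>i<k. u i * log_sol c i z)"
      by (intro sum.cong) (simp_all add: theta_c_log_sol[OF np] del: of_nat_Suc)
    finally show ?thesis using u[OF z] by simp
  qed
  have "theta_c c (\<lambda>z. F z - P z) z = 0" if z: "z \<in> S" for z
    using theta_c_funpow_lincomb[OF Suc.prems(1) P S(1) z, where c = c and k = 1 and a = 1 and b = "-1"]
      theta_P[OF z] by simp
  moreover have "(\<lambda>z. F z - P z) holomorphic_on S"
    using Suc.prems(1) P by (intro holomorphic_intros)
  ultimately obtain a where a: "\<And>z. z \<in> S \<Longrightarrow> F z - P z = a * z powr (1 - c)"
    using theta_c_kernel[OF S] by blast
  define v where "v i = (if i = 0 then a else u (i - 1) / of_nat i)" for i
  have "F z = (\<Sum>i<Suc k. v i * log_sol c i z)" if z: "z \<in> S" for z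
  proof -
    have "F z = a * log_sol c 0 z + P z" using a[OF z] by (simp add: log_sol_def algebra_simps)
    then show ?thesis unfolding sum.lessThan_Suc_shift P_def v_def by simp
  qed
  then show ?case by blast
qed simp

lemma theta_c_has_preimage:
  assumes S: "open S" "starlike S" "S \<inter> \<real>\<^sub>\<le>\<^sub>0 = {}" and g: "g holomorphic_on S"
  shows "\<exists>F. F holomorphic_on S \<and> (\<forall>z\<in>S. theta_c c F z = g z)"
proof -
  define k where "k z = z powr (c - 2) * g z" for z
  have "k holomorphic_on S"
    unfolding k_def using S g by (intro holomorphic_intros) auto
  then obtain H where H: "\<And>z. z \<in> S \<Longrightarrow> (H has_field_derivative k z) (at z)"
    using holomorphic_starlike_primitive[OF _ S(2,1) finite.emptyI] S(1)
    by (metis holomorphic_on_imp_continuous_on holomorphic_on_imp_differentiable_at DiffD1)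
  \<comment> \<open>\<open>\<theta> (z^(1-c) H) = z^(2-c) H'\<close>\<close>
  define F where "F z = z powr (1 - c) * H z" for z
  have "F holomorphic_on S"
    unfolding F_def using S H by (intro holomorphic_intros) (auto simp: holomorphic_on_open)
  moreover have "theta_c c F z = g z" if z: "z \<in> S" for z
  proof -
    have np: "z \<notin> \<real>\<^sub>\<le>\<^sub>0" and nz: "z \<noteq> 0" using z S by auto
    have "(F has_field_derivative (1 - c) * z powr (1 - c - 1) * H z + k z * z powr (1 - c)) (at z)"
      unfolding F_def by (intro DERIV_mult has_field_derivative_powr[OF np] H[OF z])
    then have "z * deriv F z = (1 - c) * (z * z powr (1 - c - 1)) * H z
        + g z * (z * (z powr (c - 2) * z powr (1 - c)))"
      unfolding k_def by (simp add: DERIV_imp_deriv algebra_simps)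
    also have "z * z powr (1 - c - 1) = z powr (1 - c)"
      using powr_add[of z "1 - c - 1" 1] nz by simp
    also have "z * (z powr (c - 2) * z powr (1 - c)) = 1"
      using powr_add[of z "c - 2" "1 - c"] powr_add[of z 1 "-1"] nz by simp
    finally show ?thesis
      unfolding theta_c_def F_def by (simp add: algebra_simps)
  qed
  ultimately show ?thesis by blast
qed

lemma log_sol_sum_eq_0_imp:
  assumes zero: "\<And>z. z \<in> cut_plane \<Longrightarrow> (\<Sum>p<m. v p * log_sol c p z) = 0" and "p < m"
  shows "v p = 0"
proof -
  \<comment> \<open>On \<open>(0, 1)\<close> the logarithm takes infinitely many values, all roots of \<open>\<Sum>p<m. v p * w^p\<close>.\<close>
  define cf where "cf p = (if p < m then v p else 0)" for p
  have root: "(\<Sum>p\<le>m. cf p * w ^ p) = 0" if w_range: "w \<in> range (\<lambda>n::nat. - of_nat n - 1)" for w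
  proof -
    obtain n :: nat where w: "w = - of_nat n - 1" using w_range by blast
    define z where "z = exp w"
    have "z = of_real (exp (- real n - 1))" by (simp add: z_def w flip: exp_of_real)
    then have zc: "z \<in> cut_plane" by (simp add: cut_plane_iff)
    have "Ln z = w" unfolding z_def by (rule Ln_exp) (simp_all add: w)
    then have "z powr (1 - c) * (\<Sum>p<m. v p * w ^ p) = 0"
      using zero[OF zc] by (simp add: log_sol_def sum_distrib_left algebra_simps)
    moreover have "z \<noteq> 0" by (simp add: z_def)
    ultimately show ?thesis by (simp add: cf_def flip: lessThan_Suc_atMost)
  qed
  have "infinite (range (\<lambda>n::nat. - of_nat n - 1 :: complex))"
    by (rule range_inj_infinite) (auto simp: inj_on_def)
  then have "infinite {w. (\<Sum>p\<le>m. cf p * w ^ p) = 0}"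
    using root by (metis (mono_tags, lifting) infinite_super mem_Collect_eq subsetI)
  then have "cf p = 0" using polyfun_finite_roots[of cf m] assms(2) by auto
  then show ?thesis using assms(2) by (simp add: cf_def)
qed

section \<open>Bases of solutions\<close>

lemma is_solution_iff:
  "is_solution c m F \<longleftrightarrow> F holomorphic_on cut_plane \<and>
     (\<exists>K. \<forall>z\<in>cut_plane. (theta_c c ^^ m) F z = K * (z / (1 - z)))"
proof -
  define h where "h w = (1 - w) / w * (theta_c c ^^ m) F w" for w
  have Dop_h: "Dop c m F z = z ^ 2 * deriv h z" for z
    unfolding Dop_def h_def ..
  have h_eq: "h z = K \<longleftrightarrow> (theta_c c ^^ m) F z = K * (z / (1 - z))" if "z \<in> cut_plane" for z K
    using cut_plane_nonzero[OF that] cut_plane_ne_1[OF that] by (auto simp: h_def field_simps)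
  show ?thesis
  proof (intro iffI conjI)
    assume sol: "is_solution c m F"
    then have F: "F holomorphic_on cut_plane" by (simp add: is_solution_def)
    then show "F holomorphic_on cut_plane" .
    have hol: "h holomorphic_on cut_plane"
      unfolding h_def using F open_cut_plane cut_plane_nonzero
      by (intro holomorphic_intros holomorphic_on_theta_c_funpow) auto
    have "(h has_field_derivative 0) (at z)" if z: "z \<in> cut_plane" for z
    proof -
      have "deriv h z = 0"
        using sol z cut_plane_nonzero[OF z] unfolding is_solution_def Dop_h by auto
      then show ?thesis using holomorphic_derivI[OF hol open_cut_plane z] by simp
    qed
    then obtain K where "\<And>z. z \<in> cut_plane \<Longrightarrow> h z = K"
      using DERIV_zero_connected_constant[OF connected_cut_plane open_cut_plane finite.emptyI
          holomorphic_on_imp_continuous_on[OF hol]] by blast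
    then show "\<exists>K. \<forall>z\<in>cut_plane. (theta_c c ^^ m) F z = K * (z / (1 - z))"
      using h_eq by blast
  next
    assume "F holomorphic_on cut_plane \<and> (\<exists>K. \<forall>z\<in>cut_plane. (theta_c c ^^ m) F z = K * (z / (1 - z)))"
    then obtain K where F: "F holomorphic_on cut_plane"
      and K: "\<And>z. z \<in> cut_plane \<Longrightarrow> (theta_c c ^^ m) F z = K * (z / (1 - z))" by blast
    have "deriv h z = 0" if z: "z \<in> cut_plane" for z
    proof -
      have "deriv h z = deriv (\<lambda>_. K) z"
        using z h_eq K by (intro deriv_cong_ev) (auto intro: eventually_mono[OF eventually_nhds_in_open[OF open_cut_plane]])
      then show ?thesis by simp
    qed
    then show "is_solution c m F" using F by (simp add: is_solution_def Dop_h)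
  qed
qed

lemma sum_atMost_if_0_reflect:
  fixes h :: "nat \<Rightarrow> 'a::comm_monoid_add"
  shows "(\<Sum>i\<le>m. if i = 0 then a else h (m - i)) = a + (\<Sum>p<m. h p)"
proof (cases m)
  case (Suc n)
  have "(\<Sum>i\<le>m. if i = 0 then a else h (m - i)) = a + (\<Sum>i<Suc n. h (Suc n - Suc i))"
    unfolding Suc sum.atMost_Suc_shift by (simp add: lessThan_Suc_atMost)
  also have "(\<Sum>i<Suc n. h (Suc n - Suc i)) = (\<Sum>p<Suc n. h p)"
    by (rule sum.nat_diff_reindex)
  finally show ?thesis using Suc by simp
qed simp

lemma lincomb_geometric_log_sol_eq_0_imp:
  assumes f0: "f0 holomorphic_on cut_plane"
    and theta_f0: "\<And>z. z \<in> cut_plane \<Longrightarrow> (theta_c c ^^ m) f0 z = z / (1 - z)"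
    and zero: "\<And>z. z \<in> cut_plane \<Longrightarrow> K * f0 z + (\<Sum>p<m. v p * log_sol c p z) = 0"
  shows "K = 0 \<and> (\<forall>p<m. v p = 0)"
proof -
  define L where "L z = (\<Sum>p<m. v p * log_sol c p z)" for z
  have L: "L holomorphic_on cut_plane"
    unfolding L_def using cut_plane_disjoint_nonpos_Reals by (intro holomorphic_intros holomorphic_on_log_sol)
  have "(theta_c c ^^ m) L (1/2) = (\<Sum>p<m. v p * (theta_c c ^^ m) (log_sol c p) (1/2))"
    unfolding L_def using half_in_cut_plane cut_plane_disjoint_nonpos_Reals
    by (intro theta_c_funpow_sum[OF _ _ open_cut_plane] holomorphic_on_log_sol) auto
  also have "\<dots> = 0"
    using half_in_cut_plane cut_plane_not_nonpos_Reals by (simp add: theta_c_funpow_log_sol)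
  finally have "K = (theta_c c ^^ m) (\<lambda>z. K * f0 z + 1 * L z) (1/2)"
    using theta_c_funpow_lincomb[OF f0 L open_cut_plane half_in_cut_plane, where k = m and a = K and b = 1]
      theta_f0[OF half_in_cut_plane] by simp
  also have "\<dots> = 0"
    using zero half_in_cut_plane by (intro theta_c_funpow_vanishing[OF open_cut_plane]) (auto simp: L_def)
  finally have "K = 0" .
  moreover have "v p = 0" if "p < m" for p
    using zero \<open>K = 0\<close> that by (intro log_sol_sum_eq_0_imp[where v = v and m = m and c = c]) auto
  ultimately show ?thesis by blast
qed

lemma solution_eq_lincomb_geometric_log_sol:
  assumes f0: "f0 holomorphic_on cut_plane"
    and theta_f0: "\<And>z. z \<in> cut_plane \<Longrightarrow> (theta_c c ^^ m) f0 z = z / (1 - z)"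
    and F: "is_solution c m F"
  shows "\<exists>K v. \<forall>z\<in>cut_plane. F z = K * f0 z + (\<Sum>p<m. v p * log_sol c p z)"
proof -
  obtain K where F_hol: "F holomorphic_on cut_plane"
    and K: "\<And>z. z \<in> cut_plane \<Longrightarrow> (theta_c c ^^ m) F z = K * (z / (1 - z))"
    using F by (auto simp: is_solution_iff)
  have "(theta_c c ^^ m) (\<lambda>z. 1 * F z + (- K) * f0 z) z = 0" if z: "z \<in> cut_plane" for z
    unfolding theta_c_funpow_lincomb[OF F_hol f0 open_cut_plane z] K[OF z] theta_f0[OF z] by simp
  moreover have "(\<lambda>z. 1 * F z + (- K) * f0 z) holomorphic_on cut_plane"
    using F_hol f0 by (intro holomorphic_intros)
  ultimately obtain v
    where "\<And>z. z \<in> cut_plane \<Longrightarrow> 1 * F z + (- K) * f0 z = (\<Sum>p<m. v p * log_sol c p z)"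
    using theta_c_funpow_kernel[OF open_cut_plane connected_cut_plane cut_plane_disjoint_nonpos_Reals,
        where F = "\<lambda>z. 1 * F z + (- K) * f0 z" and c = c and k = m] by blast
  then have "\<forall>z\<in>cut_plane. F z = K * f0 z + (\<Sum>p<m. v p * log_sol c p z)"
    by (simp add: algebra_simps)
  then show ?thesis by blast
qed

lemma solution_basis_if_theta_c_funpow_geometric:
  assumes f0: "f0 holomorphic_on cut_plane"
    and theta_f0: "\<And>z. z \<in> cut_plane \<Longrightarrow> (theta_c c ^^ m) f0 z = z / (1 - z)"
  shows "solution_basis c m (\<lambda>i z. if i = 0 then f0 z else log_sol c (m - i) z) m"
proof -
  define f where "f i = (if i = 0 then f0 else log_sol c (m - i))" for i
  have f_apply: "f i z = (if i = 0 then f0 z else log_sol c (m - i) z)" for i z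
    by (simp add: f_def)
  have resum: "(\<Sum>i\<le>m. u i * f i z) = u 0 * f0 z + (\<Sum>p<m. u (m - p) * log_sol c p z)" for u z
    using sum_atMost_if_0_reflect[of "u 0 * f0 z" "\<lambda>p. u (m - p) * log_sol c p z" m]
    by (simp add: f_apply if_distrib cong: if_cong)
  have "is_solution c m (f i)" if "i \<le> m" for i
  proof -
    have "f i holomorphic_on cut_plane"
      using f0 holomorphic_on_log_sol[OF cut_plane_disjoint_nonpos_Reals] by (simp add: f_def)
    moreover have "(theta_c c ^^ m) (f i) z = (if i = 0 then 1 else 0) * (z / (1 - z))"
      if "z \<in> cut_plane" for z
      using that \<open>i \<le> m\<close> theta_f0 theta_c_funpow_log_sol cut_plane_not_nonpos_Reals by (simp add: f_def)
    ultimately show ?thesis by (auto simp: is_solution_iff)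
  qed
  moreover have "\<forall>i\<le>m. u i = 0" if zero: "\<forall>z\<in>cut_plane. (\<Sum>i\<le>m. u i * f i z) = 0" for u
  proof -
    have "u 0 * f0 z + (\<Sum>p<m. u (m - p) * log_sol c p z) = 0" if "z \<in> cut_plane" for z
      using zero that unfolding resum by blast
    then have "u 0 = 0 \<and> (\<forall>p<m. u (m - p) = 0)"
      using lincomb_geometric_log_sol_eq_0_imp[OF f0 theta_f0, where K = "u 0" and v = "\<lambda>p. u (m - p)"]
      by blast
    then show ?thesis
      by (metis diff_diff_cancel diff_less neq0_conv le_neq_implies_less zero_less_diff)
  qed
  moreover have "\<exists>u. \<forall>z\<in>cut_plane. F z = (\<Sum>i\<le>m. u i * f i z)" if sol: "is_solution c m F" for F
  proof -
    obtain K v where "\<forall>z\<in>cut_plane. F z = K * f0 z + (\<Sum>p<m. v p * log_sol c p z)"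
      using solution_eq_lincomb_geometric_log_sol[OF f0 theta_f0 sol] by blast
    moreover have "(\<Sum>i\<le>m. (if i = 0 then K else v (m - i)) * f i z)
        = K * f0 z + (\<Sum>p<m. v p * log_sol c p z)" for z
      unfolding resum by simp
    ultimately show ?thesis by metis
  qed
  moreover have "(\<lambda>i z. if i = 0 then f0 z else log_sol c (m - i) z) = f"
    by (simp add: f_apply fun_eq_iff)
  ultimately show ?thesis
    unfolding solution_basis_def by auto
qed

section \<open>Power series and analytic continuation\<close>

lemma summable_power_series_eventually_bounded:
  fixes b :: "nat \<Rightarrow> complex"
  assumes "eventually (\<lambda>n. norm (b n) \<le> B) sequentially" "norm w < 1"
  shows "summable (\<lambda>n. b n * w ^ n)"
proof (rule summable_comparison_test_ev)
  show "eventually (\<lambda>n. norm (b n * w ^ n) \<le> B * norm w ^ n) sequentially"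
    using assms(1) by eventually_elim (simp add: norm_mult norm_power mult_right_mono)
  show "summable (\<lambda>n. B * norm w ^ n)"
    using assms(2) by (intro summable_mult summable_geometric) auto
qed

lemma shifted_power_series:
  fixes a :: "nat \<Rightarrow> complex"
  assumes bound: "eventually (\<lambda>n. norm (a n) \<le> B) sequentially" and z: "norm z < 1"
  shows "summable (\<lambda>n. a n * z ^ (n + 1))"
    and "summable (\<lambda>n. of_nat (Suc n) * a n * z ^ n)"
    and "((\<lambda>z. \<Sum>n. a n * z ^ (n + 1)) has_field_derivative (\<Sum>n. of_nat (Suc n) * a n * z ^ n)) (at z)"
proof -
  define b where "b n = (if n = 0 then 0 else a (n - 1))" for n
  have "eventually (\<lambda>n. norm (b n) \<le> B) sequentially"
    unfolding eventually_sequentially_Suc[of "\<lambda>n. norm (b n) \<le> B", symmetric]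
    using bound by (simp add: b_def)
  then have sb: "summable (\<lambda>n. b n * w ^ n)" if "norm w < 1" for w
    using that by (rule summable_power_series_eventually_bounded)
  have shift: "(\<lambda>n. a n * w ^ (n + 1)) sums (\<Sum>n. b n * w ^ n)" if "norm w < 1" for w
    using sums_Suc_iff[of "\<lambda>n. b n * w ^ n"] summable_sums[OF sb[OF that]] by (simp add: b_def)
  show "summable (\<lambda>n. a n * z ^ (n + 1))"
    using shift[OF z] by (rule sums_summable)
  have diffs: "diffs b = (\<lambda>n. of_nat (Suc n) * a n)"
    by (simp add: diffs_def b_def fun_eq_iff)
  show "summable (\<lambda>n. of_nat (Suc n) * a n * z ^ n)"
    using termdiff_converges[OF z sb] unfolding diffs .
  have "((\<lambda>z. \<Sum>n. b n * z ^ n) has_field_derivative (\<Sum>n. diffs b n * z ^ n)) (at z)"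
    by (rule termdiffs_strong'[OF sb z])
  then show "((\<lambda>z. \<Sum>n. a n * z ^ (n + 1)) has_field_derivative (\<Sum>n. of_nat (Suc n) * a n * z ^ n)) (at z)"
    unfolding diffs
    by (rule has_field_derivative_transform_within_open[where S = "ball 0 1"])
       (use z shift in \<open>auto simp: sums_iff\<close>)
qed

lemma holomorphic_on_shifted_power_series:
  fixes a :: "nat \<Rightarrow> complex"
  assumes "eventually (\<lambda>n. norm (a n) \<le> B) sequentially"
  shows "(\<lambda>z. \<Sum>n. a n * z ^ (n + 1)) holomorphic_on ball 0 1"
  unfolding holomorphic_on_open[OF open_ball] field_differentiable_def
  using shifted_power_series(3)[OF assms] by force

lemma theta_c_shifted_power_series:
  fixes a :: "nat \<Rightarrow> complex"
  assumes bound: "eventually (\<lambda>n. norm (a n) \<le> B) sequentially" and z: "norm z < 1"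
  shows "theta_c c (\<lambda>z. \<Sum>n. a n * z ^ (n + 1)) z = (\<Sum>n. ((of_nat n + c) * a n) * z ^ (n + 1))"
proof -
  note s = shifted_power_series[OF bound z]
  have "theta_c c (\<lambda>z. \<Sum>n. a n * z ^ (n + 1)) z
      = (\<Sum>n. z * (of_nat (Suc n) * a n * z ^ n)) + (\<Sum>n. (c - 1) * (a n * z ^ (n + 1)))"
    unfolding theta_c_def DERIV_imp_deriv[OF s(3)] suminf_mult[OF s(1)] suminf_mult[OF s(2)] ..
  also have "\<dots> = (\<Sum>n. z * (of_nat (Suc n) * a n * z ^ n) + (c - 1) * (a n * z ^ (n + 1)))"
    using s by (intro suminf_add summable_mult)
  also have "\<dots> = (\<Sum>n. ((of_nat n + c) * a n) * z ^ (n + 1))"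
    by (simp add: algebra_simps)
  finally show ?thesis .
qed

text \<open>Successive \<open>\<theta>\<close>-primitives \<open>P j\<close> of \<open>g\<close> on the cut disc.  Since \<open>\<theta>\<close> is onto on the cut plane,
  each \<open>P j\<close> continues analytically to the cut plane, and \<open>\<theta>^j\<close> of the continuation is \<open>g\<close>.\<close>
definition theta_chain :: "complex \<Rightarrow> (nat \<Rightarrow> complex \<Rightarrow> complex) \<Rightarrow> (complex \<Rightarrow> complex) \<Rightarrow> bool" where
  "theta_chain c P g \<longleftrightarrow> (\<forall>j. P j holomorphic_on cut_disc) \<and>
     (\<forall>j. \<forall>z\<in>cut_disc. theta_c c (P (Suc j)) z = P j z) \<and> (\<forall>z\<in>cut_disc. P 0 z = g z)"

lemma theta_chain_extends:
  assumes P: "theta_chain c P g" and g: "g holomorphic_on cut_plane"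
  shows "\<exists>f. f holomorphic_on cut_plane \<and> (\<forall>z\<in>cut_disc. f z = P m z)"
proof (induction m)
  case 0
  then show ?case using g P by (auto simp: theta_chain_def)
next
  case (Suc m)
  then obtain f where f: "f holomorphic_on cut_plane" "\<And>z. z \<in> cut_disc \<Longrightarrow> f z = P m z"
    by blast
  obtain F where F: "F holomorphic_on cut_plane" "\<And>z. z \<in> cut_plane \<Longrightarrow> theta_c c F z = f z"
    using theta_c_has_preimage[OF open_cut_plane starlike_cut_plane cut_plane_disjoint_nonpos_Reals f(1)]
    by blast
  have disc: "open cut_disc" "connected cut_disc" "cut_disc \<inter> \<real>\<^sub>\<le>\<^sub>0 = {}"
    using open_cut_disc connected_cut_disc cut_disc_subset cut_plane_disjoint_nonpos_Reals by auto
  have F_disc: "F holomorphic_on cut_disc"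
    using holomorphic_on_subset[OF F(1) cut_disc_subset(1)] .
  have P_disc: "P (Suc m) holomorphic_on cut_disc"
    using P by (simp add: theta_chain_def)
  have "theta_c c (\<lambda>z. F z - P (Suc m) z) z = 0" if z: "z \<in> cut_disc" for z
  proof -
    have "theta_c c F z = P m z"
      using F(2) f(2)[OF z] z cut_disc_subset by auto
    moreover have "theta_c c (P (Suc m)) z = P m z"
      using P z by (simp add: theta_chain_def)
    ultimately show ?thesis
      using theta_c_funpow_lincomb[OF F_disc P_disc open_cut_disc z, where k = 1 and a = 1 and b = "-1"]
      by simp
  qed
  moreover have "(\<lambda>z. F z - P (Suc m) z) holomorphic_on cut_disc"
    using F_disc P_disc by (intro holomorphic_intros)
  ultimately obtain a where a: "\<And>z. z \<in> cut_disc \<Longrightarrow> F z - P (Suc m) z = a * z powr (1 - c)"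
    using theta_c_kernel[OF disc] by blast
  have "(\<lambda>z. F z - a * z powr (1 - c)) holomorphic_on cut_plane"
    using F(1) cut_plane_not_nonpos_Reals by (intro holomorphic_intros) auto
  moreover have "\<forall>z\<in>cut_disc. F z - a * z powr (1 - c) = P (Suc m) z"
    using a by (auto simp: algebra_simps)
  ultimately show ?case by blast
qed

lemma theta_c_funpow_theta_chain_extension:
  assumes P: "theta_chain c P g" and g: "g holomorphic_on cut_plane"
    and f: "f holomorphic_on cut_plane" and f_disc: "\<And>z. z \<in> cut_disc \<Longrightarrow> f z = P m z"
    and z: "z \<in> cut_plane"
  shows "(theta_c c ^^ m) f z = g z"
proof -
  have "(theta_c c ^^ j) f w = P (m - j) w" if "j \<le> m" "w \<in> cut_disc" for j w
    using that
  proof (induction j arbitrary: w)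
    case (Suc j)
    have IH: "(theta_c c ^^ j) f v = P (Suc (m - Suc j)) v" if "v \<in> cut_disc" for v
      using Suc.IH[OF _ that] Suc.prems(1) by (simp add: Suc_diff_Suc)
    have "(theta_c c ^^ Suc j) f w = theta_c c (P (Suc (m - Suc j))) w"
      using theta_c_cong[OF open_cut_disc Suc.prems(2) IH] by simp
    also have "\<dots> = P (m - Suc j) w"
      using P Suc.prems(2) by (simp add: theta_chain_def)
    finally show ?case .
  qed (simp add: f_disc)
  then have on_disc: "(theta_c c ^^ m) f w = g w" if "w \<in> cut_disc" for w
    using P that by (simp add: theta_chain_def)
  have "cut_disc \<noteq> {}" using half_in_cut_disc by blast
  then show ?thesis
    using analytic_continuation_open[OF open_cut_disc open_cut_plane _ connected_cut_plane
        cut_disc_subset(1) holomorphic_on_theta_c_funpow[OF f open_cut_plane] g on_disc z] by blast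
qed

lemma geometric_shifted_sums:
  fixes z :: complex
  shows "norm z < 1 \<Longrightarrow> (\<lambda>n. z ^ (n + 1)) sums (z / (1 - z))"
  using sums_mult[OF geometric_sums, of z z] by (simp add: field_simps)

lemma holomorphic_on_geometric_cut_plane: "(\<lambda>z. z / (1 - z)) holomorphic_on cut_plane"
  using cut_plane_ne_1 by (intro holomorphic_intros) auto

lemma theta_chain_continuation:
  assumes "theta_chain c P g" "g holomorphic_on cut_plane"
    and "f = (SOME f. f holomorphic_on cut_plane \<and> (\<forall>z\<in>cut_disc. f z = P m z))"
  shows "f holomorphic_on cut_plane" "\<And>z. z \<in> cut_plane \<Longrightarrow> (theta_c c ^^ m) f z = g z"
proof -
  have "f holomorphic_on cut_plane \<and> (\<forall>z\<in>cut_disc. f z = P m z)"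
    unfolding assms(3) using theta_chain_extends[OF assms(1,2)] by (rule someI_ex)
  then show "f holomorphic_on cut_plane" "\<And>z. z \<in> cut_plane \<Longrightarrow> (theta_c c ^^ m) f z = g z"
    using theta_c_funpow_theta_chain_extension[OF assms(1,2)] by auto
qed

section \<open>The polylogarithms\<close>

definition Li_series :: "complex \<Rightarrow> nat \<Rightarrow> complex \<Rightarrow> complex" where
  "Li_series c j z = (\<Sum>n. z ^ (n + 1) / (of_nat n + c) ^ j)"

lemma eventually_norm_inverse_power_le_1:
  fixes c :: complex
  shows "eventually (\<lambda>n. norm (inverse (of_nat n + c) ^ j) \<le> 1) sequentially"
proof (rule eventually_sequentiallyI)
  fix n assume "nat \<lceil>norm c\<rceil> + 1 \<le> n"
  then have "1 \<le> real n - norm c" by linarith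
  moreover have "norm (of_nat n :: complex) - norm c \<le> norm (of_nat n + c)"
    by (rule norm_diff_ineq)
  moreover have "norm (of_nat n :: complex) = real n" by simp
  ultimately have "1 \<le> norm (of_nat n + c)" by linarith
  then show "norm (inverse (of_nat n + c) ^ j) \<le> 1"
    by (simp add: norm_power norm_inverse inverse_le_1_iff power_le_one)
qed

lemma theta_chain_shifted_power_series:
  assumes bound: "\<And>j. eventually (\<lambda>n. norm (a j n) \<le> B) sequentially"
    and step: "\<And>j n. (of_nat n + c) * a (Suc j) n = a j n"
    and base: "\<And>z. z \<in> cut_disc \<Longrightarrow> (\<Sum>n. a 0 n * z ^ (n + 1)) = g z"
  shows "theta_chain c (\<lambda>j z. \<Sum>n. a j n * z ^ (n + 1)) g"
proof -
  have "(\<lambda>z. \<Sum>n. a j n * z ^ (n + 1)) holomorphic_on cut_disc" for j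
    using holomorphic_on_shifted_power_series[OF bound] cut_disc_subset(2) by (rule holomorphic_on_subset)
  moreover have "theta_c c (\<lambda>z. \<Sum>n. a (Suc j) n * z ^ (n + 1)) z = (\<Sum>n. a j n * z ^ (n + 1))"
    if "z \<in> cut_disc" for j z
    using that cut_disc_subset theta_c_shifted_power_series[OF bound, of z c "Suc j"]
    by (auto simp: step)
  ultimately show ?thesis using base by (simp add: theta_chain_def)
qed

lemma theta_chain_add:
  assumes "theta_chain c P g" "theta_chain c Q h"
  shows "theta_chain c (\<lambda>j z. P j z + Q j z) (\<lambda>z. g z + h z)"
proof -
  have P: "P j holomorphic_on cut_disc" and Q: "Q j holomorphic_on cut_disc" for j
    using assms by (simp_all add: theta_chain_def)
  have "theta_c c (\<lambda>z. P (Suc j) z + Q (Suc j) z) z = P j z + Q j z" if "z \<in> cut_disc" for j z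
    using theta_c_funpow_lincomb[OF P Q open_cut_disc that, where k = 1 and a = 1 and b = 1] assms that
    by (simp add: theta_chain_def)
  then show ?thesis
    using assms P Q by (auto simp: theta_chain_def intro!: holomorphic_intros)
qed

lemma theta_chain_Li_series:
  assumes c: "c \<notin> \<int>\<^sub>\<le>\<^sub>0"
  shows "theta_chain c (Li_series c) (\<lambda>z. z / (1 - z))"
proof -
  have "Li_series c = (\<lambda>j z. \<Sum>n. inverse (of_nat n + c) ^ j * z ^ (n + 1))"
    unfolding Li_series_def by (simp add: fun_eq_iff divide_inverse power_inverse mult.commute)
  moreover have "of_nat n + c \<noteq> 0" for n
    using c plus_of_nat_eq_0_imp[of c n] by (auto simp: add.commute)
  then have "theta_chain c (\<lambda>j z. \<Sum>n. inverse (of_nat n + c) ^ j * z ^ (n + 1)) (\<lambda>z. z / (1 - z))"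
    using eventually_norm_inverse_power_le_1 cut_disc_subset geometric_shifted_sums
    by (intro theta_chain_shifted_power_series) (auto simp: sums_iff mult.assoc[symmetric])
  ultimately show ?thesis by simp
qed

lemma Li_eq_SOME:
  "Li m c = (SOME f. f holomorphic_on cut_plane \<and> (\<forall>z\<in>cut_disc. f z = Li_series c m z))"
  unfolding Li_def Li_series_def cut_disc_def ..

lemma holomorphic_on_Li:
  "c \<notin> \<int>\<^sub>\<le>\<^sub>0 \<Longrightarrow> Li m c holomorphic_on cut_plane"
  by (rule theta_chain_continuation(1)[OF theta_chain_Li_series holomorphic_on_geometric_cut_plane Li_eq_SOME])

lemma theta_c_funpow_Li:
  "c \<notin> \<int>\<^sub>\<le>\<^sub>0 \<Longrightarrow> z \<in> cut_plane \<Longrightarrow> (theta_c c ^^ m) (Li m c) z = z / (1 - z)"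
  by (rule theta_chain_continuation(2)[OF theta_chain_Li_series holomorphic_on_geometric_cut_plane Li_eq_SOME])

definition Li_star_series :: "nat \<Rightarrow> nat \<Rightarrow> complex \<Rightarrow> complex" where
  "Li_star_series k j z = (\<Sum>n. if n = k then 0 else z ^ (n + 1) / (of_int (int n - int k)) ^ j)
     + z ^ (k + 1) * (Ln z) ^ j / of_nat (fact j)"

lemma log_sol_neg_of_nat:
  "z \<noteq> 0 \<Longrightarrow> log_sol (- of_nat k) j z = z ^ (k + 1) * Ln z ^ j"
  using powr_nat'[of z "k + 1"] by (simp add: log_sol_def add.commute)

lemma theta_c_log_term:
  assumes z: "z \<notin> \<real>\<^sub>\<le>\<^sub>0"
  shows "theta_c (- of_nat k) (\<lambda>z. z ^ (k + 1) * Ln z ^ Suc j / of_nat (fact (Suc j))) z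
       = z ^ (k + 1) * Ln z ^ j / of_nat (fact j)"
proof -
  let ?c = "- of_nat k :: complex"
  have nz: "z \<noteq> 0" using z by auto
  have "theta_c ?c (\<lambda>z. z ^ (k + 1) * Ln z ^ Suc j / of_nat (fact (Suc j))) z
      = theta_c ?c (\<lambda>z. inverse (of_nat (fact (Suc j))) * log_sol ?c (Suc j) z) z"
  proof (rule theta_c_cong[OF open_slit_plane])
    fix w :: complex assume "w \<in> - \<real>\<^sub>\<le>\<^sub>0"
    then have "w \<noteq> 0" by auto
    then show "w ^ (k + 1) * Ln w ^ Suc j / of_nat (fact (Suc j))
        = inverse (of_nat (fact (Suc j))) * log_sol ?c (Suc j) w"
      by (simp add: log_sol_neg_of_nat field_simps)
  qed (use z in auto)
  also have "\<dots> = inverse (of_nat (fact (Suc j))) * (of_nat (Suc j) * log_sol ?c j z)"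
    using theta_c_funpow_scale[OF holomorphic_on_log_sol open_slit_plane, where k = 1 and z = z] z
    by (simp add: theta_c_log_sol[OF z])
  also have "\<dots> = inverse (of_nat (fact j)) * log_sol ?c j z"
  proof -
    have "(of_nat (fact (Suc j)) :: complex) = of_nat (Suc j) * of_nat (fact j)"
      by (simp only: fact_Suc of_nat_mult of_nat_id)
    moreover have "(of_nat (Suc j) :: complex) \<noteq> 0"
      by (simp del: of_nat_Suc)
    ultimately show ?thesis by (simp del: of_nat_Suc of_nat_fact fact_Suc)
  qed
  also have "\<dots> = z ^ (k + 1) * Ln z ^ j / of_nat (fact j)"
    using nz by (simp add: log_sol_neg_of_nat field_simps)
  finally show ?thesis .
qed

lemma theta_chain_log_term:
  "theta_chain (- of_nat k) (\<lambda>j z. z ^ (k + 1) * Ln z ^ j / of_nat (fact j)) (\<lambda>z. z ^ (k + 1))"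
proof -
  have "(\<lambda>z. z ^ (k + 1) * Ln z ^ j / of_nat (fact j)) holomorphic_on cut_disc" for j
    using cut_disc_subset cut_plane_not_nonpos_Reals by (intro holomorphic_intros) auto
  moreover have "theta_c (- of_nat k) (\<lambda>z. z ^ (k + 1) * Ln z ^ Suc j / of_nat (fact (Suc j))) z
      = z ^ (k + 1) * Ln z ^ j / of_nat (fact j)" if "z \<in> cut_disc" for j z
    using that cut_disc_subset cut_plane_not_nonpos_Reals by (intro theta_c_log_term) auto
  moreover have "z ^ (k + 1) * Ln z ^ 0 / of_nat (fact 0) = z ^ (k + 1)" for z :: complex
    by simp
  ultimately show ?thesis unfolding theta_chain_def by blast
qed

text \<open>The logarithmic term supplies the resonant term \<open>z^(k+1)\<close> missing from the power series.\<close>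
lemma theta_chain_Li_star_series:
  "theta_chain (- of_nat k) (Li_star_series k) (\<lambda>z. z / (1 - z))"
proof -
  define a :: "nat \<Rightarrow> nat \<Rightarrow> complex" where
    "a j n = (if n = k then 0 else inverse (of_int (int n - int k)) ^ j)" for j n
  have "norm (a j n) \<le> 1" for j n
  proof -
    have "n \<noteq> k \<Longrightarrow> 1 \<le> norm (of_int (int n - int k) :: complex)"
      by (metis norm_of_int of_int_1_le_iff of_int_abs zero_less_abs_iff int_one_le_iff_zero_less
          right_minus_eq of_nat_eq_iff)
    then show ?thesis
      by (simp add: a_def norm_power norm_inverse inverse_le_1_iff power_le_one)
  qed
  moreover have "(of_nat n + - of_nat k) * a (Suc j) n = a j n" for j n
    by (cases "n = k") (simp_all add: a_def mult.assoc[symmetric])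
  moreover have "(\<Sum>n. a 0 n * z ^ (n + 1)) = z / (1 - z) - z ^ (k + 1)" if "z \<in> cut_disc" for z
  proof -
    have "(\<lambda>n. z ^ (n + 1) - (if n = k then z ^ (n + 1) else 0)) sums (z / (1 - z) - z ^ (k + 1))"
      using that cut_disc_subset by (intro sums_diff geometric_shifted_sums sums_single) auto
    moreover have "(\<lambda>n. z ^ (n + 1) - (if n = k then z ^ (n + 1) else 0)) = (\<lambda>n. a 0 n * z ^ (n + 1))"
      by (simp add: a_def fun_eq_iff)
    ultimately show ?thesis by (metis sums_unique)
  qed
  ultimately have "theta_chain (- of_nat k) (\<lambda>j z. \<Sum>n. a j n * z ^ (n + 1)) (\<lambda>z. z / (1 - z) - z ^ (k + 1))"
    by (intro theta_chain_shifted_power_series always_eventually) auto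
  from theta_chain_add[OF this theta_chain_log_term]
  have "theta_chain (- of_nat k) (\<lambda>j z. (\<Sum>n. a j n * z ^ (n + 1)) + z ^ (k + 1) * Ln z ^ j / of_nat (fact j))
      (\<lambda>z. z / (1 - z))"
    by simp
  moreover have "(\<lambda>j z. (\<Sum>n. a j n * z ^ (n + 1)) + z ^ (k + 1) * Ln z ^ j / of_nat (fact j))
      = Li_star_series k"
    unfolding Li_star_series_def a_def
    by (intro ext arg_cong2[where f = "(+)"] suminf_cong refl)
       (simp add: divide_inverse power_inverse mult.commute)
  ultimately show ?thesis by simp
qed

lemma Li_star_eq_SOME:
  "Li_star m k = (SOME f. f holomorphic_on cut_plane \<and> (\<forall>z\<in>cut_disc. f z = Li_star_series k m z))"
  unfolding Li_star_def Li_star_series_def cut_disc_def ..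

lemma holomorphic_on_Li_star: "Li_star m k holomorphic_on cut_plane"
  by (rule theta_chain_continuation(1)[OF theta_chain_Li_star_series holomorphic_on_geometric_cut_plane
        Li_star_eq_SOME])

lemma theta_c_funpow_Li_star:
  "z \<in> cut_plane \<Longrightarrow> (theta_c (- of_nat k) ^^ m) (Li_star m k) z = z / (1 - z)"
  by (rule theta_chain_continuation(2)[OF theta_chain_Li_star_series holomorphic_on_geometric_cut_plane
        Li_star_eq_SOME])

section \<open>Polynomial coefficients and singular points\<close>

fun theta_coeff :: "complex \<Rightarrow> nat \<Rightarrow> nat \<Rightarrow> complex" where
  "theta_coeff c 0 j = (if j = 0 then 1 else 0)"
| "theta_coeff c (Suc k) j = (of_nat j + c - 1) * theta_coeff c k j + (if j = 0 then 0 else theta_coeff c k (j - 1))"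

lemma theta_coeff_eq_0: "k < j \<Longrightarrow> theta_coeff c k j = 0"
  by (induction k arbitrary: j) auto

lemma theta_coeff_diag: "theta_coeff c k k = 1"
  by (induction k) (auto simp: theta_coeff_eq_0)

lemma theta_c_monomial_deriv:
  assumes F: "F holomorphic_on S" and S: "open S" and z: "z \<in> S"
  shows "theta_c c (\<lambda>w. w ^ j * (deriv ^^ j) F w) z
       = (of_nat j + c - 1) * (z ^ j * (deriv ^^ j) F z) + z ^ Suc j * (deriv ^^ Suc j) F z"
proof -
  have "((deriv ^^ j) F has_field_derivative (deriv ^^ Suc j) F z) (at z)"
    using holomorphic_derivI[OF holomorphic_higher_deriv[OF F S] S z] by simp
  then have "deriv (\<lambda>w. w ^ j * (deriv ^^ j) F w) z
      = of_nat j * (1 * z ^ (j - Suc 0)) * (deriv ^^ j) F z + (deriv ^^ Suc j) F z * z ^ j"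
    by (intro DERIV_imp_deriv DERIV_mult DERIV_power DERIV_ident)
  then have "z * deriv (\<lambda>w. w ^ j * (deriv ^^ j) F w) z
      = (z * (of_nat j * z ^ (j - Suc 0))) * (deriv ^^ j) F z + z ^ Suc j * (deriv ^^ Suc j) F z"
    by (simp add: algebra_simps)
  also have "z * (of_nat j * z ^ (j - Suc 0)) = of_nat j * z ^ j"
    by (cases j) auto
  finally show ?thesis unfolding theta_c_def by (simp add: algebra_simps)
qed

lemma theta_c_funpow_expand:
  assumes F: "F holomorphic_on S" and S: "open S" and z: "z \<in> S"
  shows "(theta_c c ^^ k) F z = (\<Sum>j\<le>k. theta_coeff c k j * (z ^ j * (deriv ^^ j) F z))"
  using z
proof (induction k arbitrary: z)
  case (Suc k)
  define T where "T j w = w ^ j * (deriv ^^ j) F w" for j w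
  have T_hol: "T j holomorphic_on S" for j
    unfolding T_def using F S by (intro holomorphic_intros)
  have "(theta_c c ^^ Suc k) F z = theta_c c (\<lambda>w. \<Sum>j\<le>k. theta_coeff c k j * T j w) z"
    using theta_c_cong[OF S Suc.prems, of "(theta_c c ^^ k) F" "\<lambda>w. \<Sum>j\<le>k. theta_coeff c k j * T j w" c] Suc.IH
    unfolding T_def by simp
  also have "\<dots> = (\<Sum>j\<le>k. theta_coeff c k j * theta_c c (T j) z)"
    by (rule theta_c_sum[OF _ _ S Suc.prems]) (use T_hol in auto)
  also have "\<dots> = (\<Sum>j\<le>k. theta_coeff c k j * ((of_nat j + c - 1) * T j z + T (Suc j) z))"
    unfolding T_def using theta_c_monomial_deriv[OF F S Suc.prems] by simp
  also have "\<dots> = (\<Sum>j\<le>k. (of_nat j + c - 1) * theta_coeff c k j * T j z + theta_coeff c k j * T (Suc j) z)"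
    by (rule sum.cong) (simp_all add: algebra_simps del: theta_coeff.simps)
  also have "\<dots> = (\<Sum>j\<le>k. (of_nat j + c - 1) * theta_coeff c k j * T j z) + (\<Sum>j\<le>k. theta_coeff c k j * T (Suc j) z)"
    by (rule sum.distrib)
  also have "(\<Sum>j\<le>k. (of_nat j + c - 1) * theta_coeff c k j * T j z)
      = (\<Sum>j\<le>Suc k. (of_nat j + c - 1) * theta_coeff c k j * T j z)"
    by (simp add: theta_coeff_eq_0)
  also have "(\<Sum>j\<le>k. theta_coeff c k j * T (Suc j) z)
      = (\<Sum>j\<le>Suc k. (if j = 0 then 0 else theta_coeff c k (j - 1)) * T j z)"
    unfolding sum.atMost_Suc_shift by simp
  also have "(\<Sum>j\<le>Suc k. (of_nat j + c - 1) * theta_coeff c k j * T j z)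
      + (\<Sum>j\<le>Suc k. (if j = 0 then 0 else theta_coeff c k (j - 1)) * T j z)
      = (\<Sum>j\<le>Suc k. theta_coeff c (Suc k) j * T j z)"
    by (simp add: sum.distrib[symmetric] algebra_simps)
  finally show ?case unfolding T_def .
qed simp

lemma Dop_eq_theta_c_funpow:
  assumes F: "F holomorphic_on S" and S: "open S" and z: "z \<in> S" "z \<noteq> 0"
  shows "Dop c m F z
       = (1 - z) * (theta_c c ^^ Suc m) F z - (c - (c - 1) * z) * (theta_c c ^^ m) F z"
proof -
  define G where "G = (theta_c c ^^ m) F"
  have "(G has_field_derivative deriv G z) (at z)"
    unfolding G_def using holomorphic_derivI[OF holomorphic_on_theta_c_funpow[OF F S] S z(1)] .
  then have "((\<lambda>w. (1 - w) / w * G w) has_field_derivative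
        (((0 - 1) * z - (1 - z) * 1) / (z * z)) * G z + deriv G z * ((1 - z) / z)) (at z)"
    by (rule DERIV_mult[OF DERIV_divide[OF DERIV_diff[OF DERIV_const DERIV_ident] DERIV_ident z(2)]])
  then have "Dop c m F z = z ^ 2 * ((((0 - 1) * z - (1 - z) * 1) / (z * z)) * G z + deriv G z * ((1 - z) / z))"
    unfolding Dop_def G_def[symmetric] by (simp only: DERIV_imp_deriv)
  also have "\<dots> = - G z + (1 - z) * (z * deriv G z)"
    using z(2) by (simp add: field_simps power2_eq_square)
  also have "z * deriv G z = theta_c c G z - (c - 1) * G z"
    unfolding theta_c_def by simp
  finally show ?thesis
    unfolding G_def by (simp add: algebra_simps)
qed

text \<open>The coefficient of \<open>(d/dz)^j\<close> in \<open>(1 - z) \<theta>^(m+1) - (c - (c - 1) z) \<theta>^m\<close>.\<close>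
definition Dop_coeff :: "complex \<Rightarrow> nat \<Rightarrow> nat \<Rightarrow> complex poly" where
  "Dop_coeff c m j = [:0, 1:] ^ j *
     [: theta_coeff c (Suc m) j - c * theta_coeff c m j, - theta_coeff c (Suc m) j + (c - 1) * theta_coeff c m j :]"

lemma Dop_eq_ode_apply:
  assumes F: "F holomorphic_on S" and S: "open S" and z: "z \<in> S" "z \<noteq> 0"
  shows "Dop c m F z = ode_apply (Dop_coeff c m) (m + 1) F z"
proof -
  have expand_Suc: "(theta_c c ^^ Suc m) F z
      = (\<Sum>j\<le>m + 1. theta_coeff c (Suc m) j * (z ^ j * (deriv ^^ j) F z))"
    using theta_c_funpow_expand[OF F S z(1), where c = c and k = "Suc m"] by simp
  have expand: "(theta_c c ^^ m) F z = (\<Sum>j\<le>m + 1. theta_coeff c m j * (z ^ j * (deriv ^^ j) F z))"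
    using theta_c_funpow_expand[OF F S z(1), where c = c and k = m] by (simp add: theta_coeff_eq_0)
  have coeff: "poly (Dop_coeff c m j) z
      = z ^ j * ((1 - z) * theta_coeff c (Suc m) j - (c - (c - 1) * z) * theta_coeff c m j)" for j
    unfolding Dop_coeff_def by (simp add: algebra_simps)
  show ?thesis
    unfolding Dop_eq_theta_c_funpow[OF F S z] expand expand_Suc ode_apply_def coeff
      sum_distrib_left sum_subtractf[symmetric]
    by (rule sum.cong) (simp_all add: algebra_simps del: theta_coeff.simps)
qed

lemma Dop_coeff_top: "Dop_coeff c m (m + 1) = [:0, 1:] ^ (m + 1) * [:1, -1:]"
  unfolding Dop_coeff_def using theta_coeff_diag[of c "Suc m"] theta_coeff_eq_0[of m "m + 1" c] by simp

lemma Dop_coeff_top_nonzero: "Dop_coeff c m (m + 1) \<noteq> 0"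
proof -
  have "([:0, 1:] :: complex poly) ^ (m + 1) \<noteq> 0" "([:1, -1:] :: complex poly) \<noteq> 0"
    by simp_all
  then show ?thesis unfolding Dop_coeff_top by (simp only: mult_eq_0_iff) blast
qed

lemma ode_ordinary_at_Dop_coeff:
  assumes "z0 \<notin> {0, 1}"
  shows "ode_ordinary_at (Dop_coeff c m) (m + 1) z0"
proof -
  have "poly (Dop_coeff c m (m + 1)) z0 \<noteq> 0"
    unfolding Dop_coeff_top using assms by simp
  then have "order z0 (Dop_coeff c m (m + 1)) = 0" by (rule order_0I)
  then show ?thesis unfolding ode_ordinary_at_def by simp
qed

lemma order_0_monomial: "order 0 ([:0, 1:] ^ n :: complex poly) = n"
  using order_power_n_n[of "0::complex" n] by simp

lemma degree_monomial: "degree ([:0, 1:] ^ n :: complex poly) = n"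
  using degree_power_eq[of "[:0, 1:] :: complex poly" n] by simp

lemma Dop_coeff_eq_monomial_times_linear: "\<exists>q. Dop_coeff c m j = [:0, 1:] ^ j * q \<and> degree q \<le> 1"
  unfolding Dop_coeff_def by (rule exI, rule conjI[OF refl]) simp

lemma ode_regular_at_0_Dop_coeff: "ode_regular_at (Dop_coeff c m) (m + 1) 0"
  unfolding ode_regular_at_def
proof (intro allI impI)
  fix j assume j: "j < m + 1"
  have "order 0 ([:1, -1:] :: complex poly) = 0" by (rule order_0I) simp
  then have top: "order 0 (Dop_coeff c m (m + 1)) = m + 1"
    unfolding Dop_coeff_top order_mult[OF Dop_coeff_top_nonzero[unfolded Dop_coeff_top]]
      order_0_monomial by simp
  show "Dop_coeff c m j = 0 \<or> order 0 (Dop_coeff c m (m + 1)) \<le> order 0 (Dop_coeff c m j) + (m + 1 - j)"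
  proof (cases "Dop_coeff c m j = 0")
    case False
    obtain q where q: "Dop_coeff c m j = [:0, 1:] ^ j * q"
      using Dop_coeff_eq_monomial_times_linear by blast
    have "order 0 (Dop_coeff c m j) \<ge> j"
      using False unfolding q by (simp add: order_mult order_0_monomial)
    then show ?thesis using j top by linarith
  qed simp
qed

lemma ode_regular_at_1_Dop_coeff: "ode_regular_at (Dop_coeff c m) (m + 1) 1"
  unfolding ode_regular_at_def
proof (intro allI impI)
  fix j assume j: "j < m + 1"
  have "order 1 ([:0, 1:] ^ (m + 1) :: complex poly) = 0" by (rule order_0I) simp
  moreover have "order 1 ([:1, -1:] :: complex poly) \<le> 1"
    using order_degree[of "[:1, -1:]" 1] by simp
  ultimately have "order 1 (Dop_coeff c m (m + 1)) \<le> 1"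
    unfolding Dop_coeff_top order_mult[OF Dop_coeff_top_nonzero[unfolded Dop_coeff_top]] by simp
  then show "Dop_coeff c m j = 0 \<or> order 1 (Dop_coeff c m (m + 1)) \<le> order 1 (Dop_coeff c m j) + (m + 1 - j)"
    using j by linarith
qed

lemma ode_regular_at_infinity_Dop_coeff: "ode_regular_at_infinity (Dop_coeff c m) (m + 1)"
  unfolding ode_regular_at_infinity_def
proof (intro allI impI disjI2)
  fix j assume j: "j < m + 1"
  obtain q where q: "Dop_coeff c m j = [:0, 1:] ^ j * q" "degree q \<le> 1"
    using Dop_coeff_eq_monomial_times_linear by blast
  have "degree (Dop_coeff c m j) \<le> j + 1"
    using degree_mult_le[of "[:0, 1:] ^ j" q] degree_monomial[of j] q by simp
  moreover have "degree (Dop_coeff c m (m + 1)) = m + 2"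
  proof -
    have nz: "([:0, 1:] :: complex poly) ^ (m + 1) \<noteq> 0" "([:1, -1:] :: complex poly) \<noteq> 0"
      by simp_all
    show ?thesis unfolding Dop_coeff_top degree_mult_eq[OF nz] degree_monomial by simp
  qed
  ultimately show "degree (Dop_coeff c m j) + (m + 1 - j) \<le> degree (Dop_coeff c m (m + 1))"
    using j by simp
qed

theorem theorem8p1:
  fixes m :: nat and c :: complex
  shows
   "(c \<notin> \<int>\<^sub>\<le>\<^sub>0 \<longrightarrow> (\<forall>z\<in>cut_plane. Dop c m (Li m c) z = 0))
    \<and> (\<exists>a :: nat \<Rightarrow> complex poly. a (m+1) \<noteq> 0 \<and>
         (\<forall>S F. open S \<longrightarrow> F holomorphic_on S \<longrightarrow>
             (\<forall>z\<in>S - {0}. Dop c m F z = ode_apply a (m+1) F z)) \<and>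
         (\<forall>z0. z0 \<notin> {0, 1} \<longrightarrow> ode_ordinary_at a (m+1) z0) \<and>
         ode_regular_at a (m+1) 0 \<and> ode_regular_at a (m+1) 1 \<and>
         ode_regular_at_infinity a (m+1))
    \<and> (c \<notin> \<int>\<^sub>\<le>\<^sub>0 \<longrightarrow>
         solution_basis c m
           (\<lambda>i z. if i = 0 then Li m c z else z powr (1 - c) * (Ln z) ^ (m - i)) m)
    \<and> (\<forall>k::nat. c = - of_nat k \<longrightarrow>
         solution_basis c m
           (\<lambda>i z. if i = 0 then Li_star m k z else z powr (1 - c) * (Ln z) ^ (m - i)) m)"
proof (intro conjI impI allI)
  assume c: "c \<notin> \<int>\<^sub>\<le>\<^sub>0"
  have "is_solution c m (Li m c)"
    using holomorphic_on_Li[OF c] theta_c_funpow_Li[OF c] by (auto simp: is_solution_iff)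
  then show "\<forall>z\<in>cut_plane. Dop c m (Li m c) z = 0"
    by (simp add: is_solution_def)
next
  show "\<exists>a :: nat \<Rightarrow> complex poly. a (m+1) \<noteq> 0 \<and>
         (\<forall>S F. open S \<longrightarrow> F holomorphic_on S \<longrightarrow>
             (\<forall>z\<in>S - {0}. Dop c m F z = ode_apply a (m+1) F z)) \<and>
         (\<forall>z0. z0 \<notin> {0, 1} \<longrightarrow> ode_ordinary_at a (m+1) z0) \<and>
         ode_regular_at a (m+1) 0 \<and> ode_regular_at a (m+1) 1 \<and>
         ode_regular_at_infinity a (m+1)"
    using Dop_coeff_top_nonzero Dop_eq_ode_apply ode_ordinary_at_Dop_coeff ode_regular_at_0_Dop_coeff
      ode_regular_at_1_Dop_coeff ode_regular_at_infinity_Dop_coeff by blast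
next
  assume "c \<notin> \<int>\<^sub>\<le>\<^sub>0"
  then show "solution_basis c m
      (\<lambda>i z. if i = 0 then Li m c z else z powr (1 - c) * (Ln z) ^ (m - i)) m"
    using solution_basis_if_theta_c_funpow_geometric[OF holomorphic_on_Li theta_c_funpow_Li]
    unfolding log_sol_def by blast
next
  fix k :: nat assume "c = - of_nat k"
  then show "solution_basis c m
      (\<lambda>i z. if i = 0 then Li_star m k z else z powr (1 - c) * (Ln z) ^ (m - i)) m"
    using solution_basis_if_theta_c_funpow_geometric[OF holomorphic_on_Li_star theta_c_funpow_Li_star]
    unfolding log_sol_def by blast
qed

end
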